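(* Let $X$, $Z$ be topological vector spaces, $C\subseteq Z$ a nonempty closed convex cone with $C^-\neq\{0\}$, and $f:X\to\mathcal{F}(Z,C)$ convex. If $f$ is efficient at $x_0\in X$, then $f$ is lower continuous at $x_0$.
   Context: $\mathcal{F}(Z,C)=\{A\subseteq Z\colon A=\operatorname{cl}(A+C)\}$ (empty set included); $C^-=\{z^*\in Z^*\colon z^*(z)\le0\ \forall z\in C\}$. $f$ is convex iff $tf(x_1)+(1-t)f(x_2)\subseteq f(tx_1+(1-t)x_2)$ for all $x_1,x_2\in X$, $t\in(0,1)$. $f$ is efficient at $x_0$ iff there exist a neighborhood $U$ of $x_0$ and a bounded set $B\subseteq Z$ (absorbed by every neighborhood of $0$) with $f(x)\cap B\neq\emptyset$ for all $x\in U$. $f$ is lower continuous at $x_0$ iff for every $z_0\in f(x_0)$ and every neighborhood $V$ of $z_0$ there is a neighborhood $U$ of $x_0$ with $f(x)\cap V\neq\emptyset$ for all $x\in U$. *)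

theory Defs
  imports "HOL-Analysis.Analysis"
begin

definition tvs :: "'a::{real_vector,topological_space} itself \<Rightarrow> bool" where
  "tvs _ \<longleftrightarrow>
     continuous_on UNIV (\<lambda>p::'a \<times> 'a. fst p + snd p) \<and>
     continuous_on UNIV (\<lambda>p::real \<times> 'a. fst p *\<^sub>R snd p)"

text \<open>The family F(Z,C) of sets A with A = cl(A + C) (empty set included).\<close>
definition FZC :: "'z::{real_vector,topological_space} set \<Rightarrow> 'z set set" where
  "FZC C = {A. A = closure {a + c | a c. a \<in> A \<and> c \<in> C}}"

definition neg_dual_cone :: "'z::{real_vector,topological_space} set \<Rightarrow> ('z \<Rightarrow> real) set" where
  "neg_dual_cone C = {g. linear g \<and> continuous_on UNIV g \<and> (\<forall>z\<in>C. g z \<le> 0)}"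

definition set_convex_fun :: "('x::real_vector \<Rightarrow> 'z::real_vector set) \<Rightarrow> bool" where
  "set_convex_fun f \<longleftrightarrow>
     (\<forall>x1 x2 t. 0 < t \<and> t < 1 \<longrightarrow>
        {t *\<^sub>R a + (1 - t) *\<^sub>R b | a b. a \<in> f x1 \<and> b \<in> f x2}
          \<subseteq> f (t *\<^sub>R x1 + (1 - t) *\<^sub>R x2))"

definition tvs_bounded :: "'z::{real_vector,topological_space} set \<Rightarrow> bool" where
  "tvs_bounded B \<longleftrightarrow>
     (\<forall>V. open V \<and> 0 \<in> V \<longrightarrow> (\<exists>t>0. B \<subseteq> (\<lambda>v. t *\<^sub>R v) ` V))"

definition efficient_at ::
  "('x::topological_space \<Rightarrow> 'z::{real_vector,topological_space} set) \<Rightarrow> 'x \<Rightarrow> bool" where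
  "efficient_at f x0 \<longleftrightarrow>
     (\<exists>U B. open U \<and> x0 \<in> U \<and> tvs_bounded B \<and> (\<forall>x\<in>U. f x \<inter> B \<noteq> {}))"

definition lower_continuous_at ::
  "('x::topological_space \<Rightarrow> 'z::topological_space set) \<Rightarrow> 'x \<Rightarrow> bool" where
  "lower_continuous_at f x0 \<longleftrightarrow>
     (\<forall>z0\<in>f x0. \<forall>V. open V \<and> z0 \<in> V \<longrightarrow>
        (\<exists>U. open U \<and> x0 \<in> U \<and> (\<forall>x\<in>U. f x \<inter> V \<noteq> {})))"

end

theory Submission
  imports Defs
begin

text \<open>Let \<open>z\<^sub>0 \<in> f x\<^sub>0\<close> and let \<open>V\<close> be a neighbourhood of \<open>z\<^sub>0\<close>. Since \<open>B\<close> is bounded, for some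
  small \<open>t \<in> (0,1)\<close> all points \<open>t b + (1 - t) z\<^sub>0\<close> with \<open>b \<in> B\<close> lie in \<open>V\<close>. For \<open>x\<close> near \<open>x\<^sub>0\<close>
  the point \<open>y = x\<^sub>0 + (x - x\<^sub>0)/t\<close> is still in the efficiency neighbourhood, so \<open>f y\<close> meets \<open>B\<close>
  in some \<open>b\<close>; as \<open>x = t y + (1 - t) x\<^sub>0\<close>, convexity puts \<open>t b + (1 - t) z\<^sub>0 \<in> f x \<inter> V\<close>.\<close>

lemma tvs_continuous_on_add:
  fixes f g :: "'b::topological_space \<Rightarrow> 'a::{real_vector,topological_space}"
  assumes "tvs TYPE('a)" "continuous_on S f" "continuous_on S g"
  shows "continuous_on S (\<lambda>x. f x + g x)"
proof -
  have "continuous_on UNIV (\<lambda>p::'a \<times> 'a. fst p + snd p)"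
    using assms(1) by (simp add: tvs_def)
  then have "continuous_on S (\<lambda>x. (\<lambda>p::'a \<times> 'a. fst p + snd p) (f x, g x))"
    by (rule continuous_on_compose2) (auto intro: continuous_on_Pair assms)
  then show ?thesis by simp
qed

lemma tvs_continuous_on_scaleR:
  fixes f :: "'b::topological_space \<Rightarrow> real" and g :: "'b \<Rightarrow> 'a::{real_vector,topological_space}"
  assumes "tvs TYPE('a)" "continuous_on S f" "continuous_on S g"
  shows "continuous_on S (\<lambda>x. f x *\<^sub>R g x)"
proof -
  have "continuous_on UNIV (\<lambda>p::real \<times> 'a. fst p *\<^sub>R snd p)"
    using assms(1) by (simp add: tvs_def)
  then have "continuous_on S (\<lambda>x. (\<lambda>p::real \<times> 'a. fst p *\<^sub>R snd p) (f x, g x))"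
    by (rule continuous_on_compose2) (auto intro: continuous_on_Pair assms)
  then show ?thesis by simp
qed

lemma tvs_bounded_shrinks_into_nhd:
  fixes B V :: "'z::{real_vector,topological_space} set"
  assumes "tvs TYPE('z)" "tvs_bounded B" "open V" "z0 \<in> V"
  shows "\<exists>t. 0 < t \<and> t < 1 \<and> (\<forall>b\<in>B. t *\<^sub>R b + (1 - t) *\<^sub>R z0 \<in> V)"
proof -
  (* The coefficient of the third component is independent of the first because the scale s with
     B \<subseteq> s N is only available once the neighbourhood N of 0 has been chosen. *)
  define K :: "real \<times> real \<times> 'z \<Rightarrow> 'z" where
    "K p = (1 - fst p) *\<^sub>R z0 + fst (snd p) *\<^sub>R snd (snd p)" for p
  have "continuous_on UNIV K"
    unfolding K_def
    by (intro tvs_continuous_on_add tvs_continuous_on_scaleR assms(1)) (auto intro!: continuous_intros)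
  then have "open (K -` V)"
    using continuous_on_open_vimage[of UNIV K] assms(3) by auto
  moreover have "(0, 0, 0) \<in> K -` V"
    using assms(4) by (simp add: K_def)
  ultimately obtain A D where AD: "open A" "open D" "(0, 0, 0) \<in> A \<times> D" "A \<times> D \<subseteq> K -` V"
    by (rule open_prod_elim)
  obtain R N where RN: "open R" "open N" "(0, 0) \<in> R \<times> N" "R \<times> N \<subseteq> D"
    using AD(2,3) by (auto elim: open_prod_elim)
  have zero_mem: "0 \<in> A" "0 \<in> R" "0 \<in> N"
    using AD(3) RN(3) by auto
  obtain s where s: "B \<subseteq> (\<lambda>v. s *\<^sub>R v) ` N"
    using assms(2) RN(2) zero_mem(3) unfolding tvs_bounded_def by blast
  have "\<forall>\<^sub>F t in at_right 0. t \<in> A"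
    using eventually_nhds_in_open[OF AD(1) zero_mem(1)]
    by (auto simp: eventually_at_filter elim: eventually_mono)
  moreover have "((\<lambda>t. t * s) \<longlongrightarrow> 0) (at_right 0)"
    by (intro tendsto_mult_left_zero tendsto_ident_at)
  then have "\<forall>\<^sub>F t in at_right 0. t * s \<in> R"
    using RN(1) zero_mem(2) by (rule topological_tendstoD)
  moreover have "\<forall>\<^sub>F t in at_right (0::real). 0 < t \<and> t < 1"
    by (simp add: eventually_at_right_field) (auto intro: exI[of _ 1])
  ultimately have "\<forall>\<^sub>F t in at_right 0. t \<in> A \<and> t * s \<in> R \<and> 0 < t \<and> t < 1"
    by eventually_elim auto
  then obtain t where t: "t \<in> A" "t * s \<in> R" "0 < t" "t < 1"
    using eventually_happens'[OF trivial_limit_at_right_real] by blast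
  have "t *\<^sub>R b + (1 - t) *\<^sub>R z0 \<in> V" if "b \<in> B" for b
  proof -
    obtain n where "n \<in> N" "b = s *\<^sub>R n" using s \<open>b \<in> B\<close> by blast
    then have "(t, t * s, n) \<in> K -` V" using t RN(4) AD(4) by blast
    then show ?thesis using \<open>b = s *\<^sub>R n\<close> by (simp add: K_def algebra_simps)
  qed
  then show ?thesis using t by blast
qed

lemma set_convex_fun_efficient_imp_lower_continuous:
  fixes f :: "'x::{real_vector,topological_space} \<Rightarrow> 'z::{real_vector,topological_space} set"
  assumes "tvs TYPE('x)" "tvs TYPE('z)" "set_convex_fun f" "efficient_at f x0"
  shows "lower_continuous_at f x0"
  unfolding lower_continuous_at_def
proof (intro ballI allI impI)
  fix z0 V assume z0: "z0 \<in> f x0" and V: "open V \<and> z0 \<in> V"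
  obtain U B where U: "open U" "x0 \<in> U" "tvs_bounded B" "\<forall>x\<in>U. f x \<inter> B \<noteq> {}"
    using assms(4) unfolding efficient_at_def by blast
  obtain t where t: "0 < t" "t < 1" "\<forall>b\<in>B. t *\<^sub>R b + (1 - t) *\<^sub>R z0 \<in> V"
    using tvs_bounded_shrinks_into_nhd[OF assms(2) U(3)] V by blast
  define g where "g x = (1 / t) *\<^sub>R x + (x0 - (1 / t) *\<^sub>R x0)" for x
  have "continuous_on UNIV g"
    unfolding g_def
    by (intro tvs_continuous_on_add tvs_continuous_on_scaleR assms(1)) (auto intro!: continuous_intros)
  then have "open (g -` U)"
    using continuous_on_open_vimage[of UNIV g] U(1) by auto
  moreover have "x0 \<in> g -` U"
    using U(2) by (simp add: g_def)
  moreover have "f x \<inter> V \<noteq> {}" if "g x \<in> U" for x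
  proof -
    obtain b where b: "b \<in> f (g x)" "b \<in> B" using U(4) \<open>g x \<in> U\<close> by blast
    have "t *\<^sub>R b + (1 - t) *\<^sub>R z0 \<in> f (t *\<^sub>R g x + (1 - t) *\<^sub>R x0)"
      using assms(3) t(1,2) b(1) z0 unfolding set_convex_fun_def by blast
    also have "t *\<^sub>R g x + (1 - t) *\<^sub>R x0 = x"
      using t by (simp add: g_def algebra_simps)
    finally show ?thesis using t(3) b(2) by blast
  qed
  ultimately show "\<exists>U. open U \<and> x0 \<in> U \<and> (\<forall>x\<in>U. f x \<inter> V \<noteq> {})"
    by (intro exI[of _ "g -` U"]) auto
qed

theorem mainTheorem3:
  fixes f :: "'x::{real_vector,topological_space} \<Rightarrow> 'z::{real_vector,topological_space} set"
    and C :: "'z set" and x0 :: 'x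
  assumes "tvs TYPE('x)" and "tvs TYPE('z)"
    and "C \<noteq> {}" and "closed C" and "convex C" and "cone C"
    and "neg_dual_cone C \<noteq> {\<lambda>_. 0}"
    and "\<forall>x. f x \<in> FZC C"
    and "set_convex_fun f"
    and "efficient_at f x0"
  shows "lower_continuous_at f x0"
  using set_convex_fun_efficient_imp_lower_continuous assms(1,2,9,10) .

end
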